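(* For any $n\ge0$, $1\le k\le n+2$ and $\varepsilon\in\{0,1\}$, the inclusion $\tau_n\sqcap^{n+2}_{k,\varepsilon}\hookrightarrow\tau_n\square^{n+2}_{k,\varepsilon}$ is a comical map.
   Context: Cubical sets are presheaves on the box category $\square$ (objects $[1]^n=\{0<1\}^n$; morphisms generated by faces $\partial_{i,\varepsilon}$ inserting $\varepsilon$ in coordinate $i$, degeneracies $\sigma_i$, and max/min connections $\gamma_{i,1},\gamma_{i,0}$); a cube is degenerate if it is $x\sigma_i$ or $x\gamma_{i,\varepsilon}$; every composite of faces has a unique normal form $\partial_{k_1,\varepsilon_1}\cdots\partial_{k_t,\varepsilon_t}$ with $k_1>\dots>k_t$. A marked cubical set is a cubical set with marked cubes of positive dimension containing all degenerate cubes; maps preserve marked cubes; category $\mathsf{cSet}^+$; colimits are computed on underlying cubical sets, a cube being marked iff it is the image of a marked cube. $\tau_jX$ is $X$ with additionally all cubes of dimension $\ge j+1$ marked. For $m\ge1$, $1\le k\le m$, $\varepsilon\in\{0,1\}$: $\square^m_{k,\varepsilon}$ is $\square^m$ in which a non-degenerate positive-dimensional face in normal form is marked iff none of its factors is $\partial_{k-1,\varepsilon},\partial_{k,0},\partial_{k,1},\partial_{k+1,\varepsilon}$; $\sqcap^m_{k,\varepsilon}$ is the union of all codimension-one faces except $\partial_{k,\varepsilon}$, with the marking making it a regular subobject of $\square^m_{k,\varepsilon}$ (comical open box inclusion). For $m\ge2$, $(\square^m_{k,\varepsilon})''=\tau_{m-2}\square^m_{k,\varepsilon}$ and $(\square^m_{k,\varepsilon})'$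 is $\square^m_{k,\varepsilon}$ with all $(m-1)$-faces other than $\partial_{k,\varepsilon}$ marked (elementary comical marking extension $(\square^m_{k,\varepsilon})'\hookrightarrow(\square^m_{k,\varepsilon})''$). A map is comical if it lies in the closure of the comical open box inclusions and elementary comical marking extensions under pushouts and transfinite composition. *)

theory Defs
  imports Main
begin

text \<open>A morphism [1]^m -> [1]^n is represented by a function on bool lists which is
  meaningful on lists of length m (and returns [] on all other lists).
  Coordinates are numbered from 1.\<close>

type_synonym cmor = "bool list \<Rightarrow> bool list"

definition cid :: "nat \<Rightarrow> cmor" where
  "cid n = (\<lambda>xs. if length xs = n then xs else [])"

definition ccomp :: "nat \<Rightarrow> cmor \<Rightarrow> cmor \<Rightarrow> cmor" where
  "ccomp l g f = (\<lambda>xs. if length xs = l then g (f xs) else [])"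

definition cface :: "nat \<Rightarrow> nat \<Rightarrow> bool \<Rightarrow> cmor" where
  "cface n i e = (\<lambda>xs. if length xs = n then take (i - 1) xs @ e # drop (i - 1) xs else [])"

definition cdegen :: "nat \<Rightarrow> nat \<Rightarrow> cmor" where
  "cdegen n i = (\<lambda>xs. if length xs = Suc n then take (i - 1) xs @ drop i xs else [])"

definition cconn :: "nat \<Rightarrow> nat \<Rightarrow> bool \<Rightarrow> cmor" where
  "cconn n i e = (\<lambda>xs. if length xs = Suc n then
       take (i - 1) xs @ (if e then (xs ! (i - 1) \<or> xs ! i) else (xs ! (i - 1) \<and> xs ! i)) # drop (i + 1) xs
     else [])"

inductive boxhom :: "nat \<Rightarrow> nat \<Rightarrow> cmor \<Rightarrow> bool" where
  bh_id: "boxhom n n (cid n)"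
| bh_face: "\<lbrakk>1 \<le> i; i \<le> Suc n\<rbrakk> \<Longrightarrow> boxhom n (Suc n) (cface n i e)"
| bh_degen: "\<lbrakk>1 \<le> i; i \<le> Suc n\<rbrakk> \<Longrightarrow> boxhom (Suc n) n (cdegen n i)"
| bh_conn: "\<lbrakk>1 \<le> i; i \<le> n\<rbrakk> \<Longrightarrow> boxhom (Suc n) n (cconn n i e)"
| bh_comp: "\<lbrakk>boxhom l m f; boxhom m n g\<rbrakk> \<Longrightarrow> boxhom l n (ccomp l g f)"

text \<open>cells X n = the n-cubes; act X m n f x = x.f for f : [1]^m -> [1]^n and x an n-cube;
  marked X n = marked n-cubes.\<close>
record 'a mcset =
  cells :: "nat \<Rightarrow> 'a set"
  act :: "nat \<Rightarrow> nat \<Rightarrow> cmor \<Rightarrow> 'a \<Rightarrow> 'a"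
  marked :: "nat \<Rightarrow> 'a set"

definition is_cset :: "'a mcset \<Rightarrow> bool" where
  "is_cset X \<longleftrightarrow>
     (\<forall>m n f x. boxhom m n f \<longrightarrow> x \<in> cells X n \<longrightarrow> act X m n f x \<in> cells X m) \<and>
     (\<forall>n x. x \<in> cells X n \<longrightarrow> act X n n (cid n) x = x) \<and>
     (\<forall>l m n f g x. boxhom l m f \<longrightarrow> boxhom m n g \<longrightarrow> x \<in> cells X n \<longrightarrow>
        act X l n (ccomp l g f) x = act X l m f (act X m n g x))"

definition degenerate :: "'a mcset \<Rightarrow> nat \<Rightarrow> 'a \<Rightarrow> bool" where
  "degenerate X n x \<longleftrightarrow> (\<exists>m. n = Suc m \<and> (\<exists>y \<in> cells X m.
      (\<exists>i. 1 \<le> i \<and> i \<le> Suc m \<and> x = act X (Suc m) m (cdegen m i) y) \<or>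
      (\<exists>i e. 1 \<le> i \<and> i \<le> m \<and> x = act X (Suc m) m (cconn m i e) y)))"

definition is_mcset :: "'a mcset \<Rightarrow> bool" where
  "is_mcset X \<longleftrightarrow> is_cset X \<and> marked X 0 = {} \<and> (\<forall>n. marked X n \<subseteq> cells X n) \<and>
     (\<forall>n x. x \<in> cells X n \<longrightarrow> degenerate X n x \<longrightarrow> x \<in> marked X n)"

definition is_mmap :: "'a mcset \<Rightarrow> 'b mcset \<Rightarrow> (nat \<Rightarrow> 'a \<Rightarrow> 'b) \<Rightarrow> bool" where
  "is_mmap X Y F \<longleftrightarrow>
     (\<forall>n x. x \<in> cells X n \<longrightarrow> F n x \<in> cells Y n) \<and>
     (\<forall>n x. x \<in> marked X n \<longrightarrow> F n x \<in> marked Y n) \<and>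
     (\<forall>m n f x. boxhom m n f \<longrightarrow> x \<in> cells X n \<longrightarrow> F m (act X m n f x) = act Y m n f (F n x))"

definition mcomp :: "(nat \<Rightarrow> 'b \<Rightarrow> 'c) \<Rightarrow> (nat \<Rightarrow> 'a \<Rightarrow> 'b) \<Rightarrow> nat \<Rightarrow> 'a \<Rightarrow> 'c" where
  "mcomp G F = (\<lambda>n x. G n (F n x))"

text \<open>Equality of maps out of X (they are only meaningful on the cubes of X).\<close>
definition eq_map :: "'a mcset \<Rightarrow> (nat \<Rightarrow> 'a \<Rightarrow> 'b) \<Rightarrow> (nat \<Rightarrow> 'a \<Rightarrow> 'b) \<Rightarrow> bool" where
  "eq_map X F G \<longleftrightarrow> (\<forall>n x. x \<in> cells X n \<longrightarrow> F n x = G n x)"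

definition is_miso :: "'a mcset \<Rightarrow> 'b mcset \<Rightarrow> (nat \<Rightarrow> 'a \<Rightarrow> 'b) \<Rightarrow> bool" where
  "is_miso X Y F \<longleftrightarrow> is_mcset X \<and> is_mcset Y \<and> is_mmap X Y F \<and>
     (\<forall>n. bij_betw (F n) (cells X n) (cells Y n)) \<and>
     (\<forall>n x. x \<in> cells X n \<longrightarrow> F n x \<in> marked Y n \<longrightarrow> x \<in> marked X n)"

definition tau :: "nat \<Rightarrow> 'a mcset \<Rightarrow> 'a mcset" where
  "tau j X = X\<lparr>marked := (\<lambda>d. marked X d \<union> (if j + 1 \<le> d then cells X d else {}))\<rparr>"

definition cube_base :: "nat \<Rightarrow> cmor mcset" where
  "cube_base m = \<lparr>cells = (\<lambda>d. {x. boxhom d m x}), act = (\<lambda>p d f x. ccomp p x f),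
                  marked = (\<lambda>d. {})\<rparr>"

text \<open>facecomp d [(k1,e1),...,(kt,et)] is the composite of faces
  partial_{k1,e1} ... partial_{kt,et} : [1]^d -> [1]^(d+t).\<close>
fun facecomp :: "nat \<Rightarrow> (nat \<times> bool) list \<Rightarrow> cmor" where
  "facecomp d [] = cid d"
| "facecomp d ((k, e) # L) = ccomp d (cface (d + length L) k e) (facecomp d L)"

definition face_nf :: "nat \<Rightarrow> (nat \<times> bool) list \<Rightarrow> bool" where
  "face_nf d L \<longleftrightarrow> sorted_wrt (\<lambda>a b. fst b < fst a) L \<and>
     (\<forall>(k, e) \<in> set L. 1 \<le> k \<and> k \<le> d + length L)"

definition forbidden_factor :: "nat \<Rightarrow> bool \<Rightarrow> nat \<Rightarrow> bool \<Rightarrow> bool" where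
  "forbidden_factor k eps j e \<longleftrightarrow>
     (j + 1 = k \<and> e = eps) \<or> j = k \<or> (j = k + 1 \<and> e = eps)"

definition cube_mk :: "nat \<Rightarrow> nat \<Rightarrow> bool \<Rightarrow> cmor mcset" where
  "cube_mk m k eps = (cube_base m)\<lparr>marked := (\<lambda>d. {x. boxhom d m x \<and> 0 < d \<and>
      (degenerate (cube_base m) d x \<or>
       (\<exists>L. face_nf d L \<and> d + length L = m \<and> x = facecomp d L \<and>
            (\<forall>(j, e) \<in> set L. \<not> forbidden_factor k eps j e)))})\<rparr>"

text \<open>The comical open box: union of all codimension-one faces except partial_{k,eps},
  with the marking induced from box^m_{k,eps}.\<close>
definition obox_cells :: "nat \<Rightarrow> nat \<Rightarrow> bool \<Rightarrow> nat \<Rightarrow> cmor set" where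
  "obox_cells m k eps d = {x. boxhom d m x \<and>
      (\<exists>j e y. 1 \<le> j \<and> j \<le> m \<and> (j, e) \<noteq> (k, eps) \<and> boxhom d (m - 1) y \<and>
               x = ccomp d (cface (m - 1) j e) y)}"

definition obox :: "nat \<Rightarrow> nat \<Rightarrow> bool \<Rightarrow> cmor mcset" where
  "obox m k eps = \<lparr>cells = obox_cells m k eps, act = (\<lambda>p d f x. ccomp p x f),
      marked = (\<lambda>d. marked (cube_mk m k eps) d \<inter> obox_cells m k eps d)\<rparr>"

definition cube_mk' :: "nat \<Rightarrow> nat \<Rightarrow> bool \<Rightarrow> cmor mcset" where
  "cube_mk' m k eps = (cube_mk m k eps)\<lparr>marked := (\<lambda>d. marked (cube_mk m k eps) d \<union>
      (if d = m - 1 then cells (cube_mk m k eps) d - {cface (m - 1) k eps} else {}))\<rparr>"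

definition cube_mk'' :: "nat \<Rightarrow> nat \<Rightarrow> bool \<Rightarrow> cmor mcset" where
  "cube_mk'' m k eps = tau (m - 2) (cube_mk m k eps)"

text \<open>Pushout square  A -j-> B, A -f-> C, C -k-> D, B -g-> D.  The universal property is
  quantified over test objects whose cubes live in the type of D.\<close>
definition is_pushout :: "'a mcset \<Rightarrow> 'b mcset \<Rightarrow> 'c mcset \<Rightarrow> 'd mcset \<Rightarrow>
    (nat \<Rightarrow> 'a \<Rightarrow> 'b) \<Rightarrow> (nat \<Rightarrow> 'a \<Rightarrow> 'c) \<Rightarrow> (nat \<Rightarrow> 'c \<Rightarrow> 'd) \<Rightarrow> (nat \<Rightarrow> 'b \<Rightarrow> 'd) \<Rightarrow> bool" where
  "is_pushout A B C D j f k g \<longleftrightarrow>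
     is_mcset A \<and> is_mcset B \<and> is_mcset C \<and> is_mcset D \<and>
     is_mmap A B j \<and> is_mmap A C f \<and> is_mmap C D k \<and> is_mmap B D g \<and>
     eq_map A (mcomp g j) (mcomp k f) \<and>
     (\<forall>(E :: 'd mcset) p q. is_mcset E \<longrightarrow> is_mmap B E p \<longrightarrow> is_mmap C E q \<longrightarrow>
        eq_map A (mcomp p j) (mcomp q f) \<longrightarrow>
        (\<exists>u. is_mmap D E u \<and> eq_map B (mcomp u g) p \<and> eq_map C (mcomp u k) q \<and>
             (\<forall>u'. is_mmap D E u' \<and> eq_map B (mcomp u' g) p \<and> eq_map C (mcomp u' k) q \<longrightarrow>
                   eq_map D u u')))"

definition is_chain :: "'i rel \<Rightarrow> ('i \<Rightarrow> 'a mcset) \<Rightarrow> ('i \<Rightarrow> 'i \<Rightarrow> nat \<Rightarrow> 'a \<Rightarrow> 'a) \<Rightarrow> bool" where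
  "is_chain r Z Phi \<longleftrightarrow> Well_order r \<and>
     (\<forall>a \<in> Field r. is_mcset (Z a)) \<and>
     (\<forall>(a, b) \<in> r. is_mmap (Z a) (Z b) (Phi a b)) \<and>
     (\<forall>a \<in> Field r. eq_map (Z a) (Phi a a) (\<lambda>n x. x)) \<and>
     (\<forall>a b c. (a, b) \<in> r \<longrightarrow> (b, c) \<in> r \<longrightarrow> eq_map (Z a) (Phi a c) (mcomp (Phi b c) (Phi a b)))"

text \<open>W with cocone psi is a colimit of the restriction of the chain to J; test objects
  have cubes in the type of W.\<close>
definition is_colimit :: "'i rel \<Rightarrow> 'i set \<Rightarrow> ('i \<Rightarrow> 'a mcset) \<Rightarrow> ('i \<Rightarrow> 'i \<Rightarrow> nat \<Rightarrow> 'a \<Rightarrow> 'a) \<Rightarrow>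
    'b mcset \<Rightarrow> ('i \<Rightarrow> nat \<Rightarrow> 'a \<Rightarrow> 'b) \<Rightarrow> bool" where
  "is_colimit r J Z Phi W psi \<longleftrightarrow> is_mcset W \<and>
     (\<forall>a \<in> J. is_mmap (Z a) W (psi a)) \<and>
     (\<forall>a \<in> J. \<forall>b \<in> J. (a, b) \<in> r \<longrightarrow> eq_map (Z a) (mcomp (psi b) (Phi a b)) (psi a)) \<and>
     (\<forall>(E :: 'b mcset) chi. is_mcset E \<longrightarrow> (\<forall>a \<in> J. is_mmap (Z a) E (chi a)) \<longrightarrow>
        (\<forall>a \<in> J. \<forall>b \<in> J. (a, b) \<in> r \<longrightarrow> eq_map (Z a) (mcomp (chi b) (Phi a b)) (chi a)) \<longrightarrow>
        (\<exists>u. is_mmap W E u \<and> (\<forall>a \<in> J. eq_map (Z a) (mcomp u (psi a)) (chi a)) \<and>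
             (\<forall>u'. is_mmap W E u' \<and> (\<forall>a \<in> J. eq_map (Z a) (mcomp u' (psi a)) (chi a)) \<longrightarrow>
                   eq_map W u u')))"

definition wo_succ :: "'i rel \<Rightarrow> 'i \<Rightarrow> 'i \<Rightarrow> bool" where
  "wo_succ r a b \<longleftrightarrow> (a, b) \<in> r \<and> a \<noteq> b \<and> (\<forall>c. (a, c) \<in> r \<and> (c, b) \<in> r \<longrightarrow> c = a \<or> c = b)"

definition wo_limit :: "'i rel \<Rightarrow> 'i \<Rightarrow> bool" where
  "wo_limit r b \<longleftrightarrow> b \<in> Field r \<and> (\<exists>a. (a, b) \<in> r \<and> a \<noteq> b) \<and> \<not> (\<exists>a. wo_succ r a b)"

definition wo_least :: "'i rel \<Rightarrow> 'i \<Rightarrow> bool" where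
  "wo_least r a \<longleftrightarrow> a \<in> Field r \<and> (\<forall>b \<in> Field r. (a, b) \<in> r)"

text \<open>Closure of the comical open box inclusions and the elementary comical marking
  extensions (up to isomorphism of arrows) under pushouts and transfinite composition,
  among maps of marked cubical sets whose cubes live in the type 'a (the chains are
  indexed by well-orders on 'a).\<close>
inductive comical :: "'a mcset \<Rightarrow> 'a mcset \<Rightarrow> (nat \<Rightarrow> 'a \<Rightarrow> 'a) \<Rightarrow> bool" where
  gen_openbox:
    "\<lbrakk>1 \<le> m; 1 \<le> k; k \<le> m; is_mmap A B F;
      is_miso (obox m k eps) A u; is_miso (cube_mk m k eps) B v;
      \<forall>n x. x \<in> cells (obox m k eps) n \<longrightarrow> v n x = F n (u n x)\<rbrakk> \<Longrightarrow> comical A B F"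
| gen_marking:
    "\<lbrakk>2 \<le> m; 1 \<le> k; k \<le> m; is_mmap A B F;
      is_miso (cube_mk' m k eps) A u; is_miso (cube_mk'' m k eps) B v;
      \<forall>n x. x \<in> cells (cube_mk' m k eps) n \<longrightarrow> v n x = F n (u n x)\<rbrakk> \<Longrightarrow> comical A B F"
| pushout:
    "\<lbrakk>comical A B j; is_pushout A B C D j f k g\<rbrakk> \<Longrightarrow> comical C D k"
| transfinite:
    "\<lbrakk>is_chain (r :: 'a rel) Z Phi; wo_least r a0;
      \<forall>a b. wo_succ r a b \<longrightarrow> comical (Z a) (Z b) (Phi a b);
      \<forall>b. wo_limit r b \<longrightarrow> is_colimit r {a. (a, b) \<in> r \<and> a \<noteq> b} Z Phi (Z b) (\<lambda>a. Phi a b);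
      is_colimit r (Field r) Z Phi Y psi\<rbrakk> \<Longrightarrow> comical (Z a0) Y (psi a0)"

end

theory Submission
  imports Defs
begin

text \<open>
  Write m = n + 2, \<box> for the comical cube \<box>^m_{k,\<epsilon>} and \<sqinter> for its comical open box. The
  inclusion factors as \<tau>_n \<sqinter> \<rightarrow> \<box>' \<rightarrow> \<tau>_n \<box> = \<box>'', and the second map is an elementary
  comical marking extension. The first one is the pushout of the open box inclusion \<sqinter> \<rightarrow> \<box> along
  \<sqinter> \<rightarrow> \<tau>_n \<sqinter>: the cubes newly marked in \<tau>_n \<sqinter> have dimension at least m - 1, and by the normal form
  of the maps of the box category such a cube is either degenerate or, in dimension m - 1, a face
  \<partial>_{j,e} other than \<partial>_{k,\<epsilon>}; these are exactly the cubes that \<box>' marks in addition to \<box>.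
  Finally, comical maps compose: a composite is a transfinite composition indexed by a
  three-element well-order.
\<close>

section \<open>Normal forms of maps in the box category\<close>

lemma boxhom_length:
  assumes "boxhom l n f"
  shows "length xs = l \<Longrightarrow> length (f xs) = n" and "length xs \<noteq> l \<Longrightarrow> f xs = []"
proof -
  have "(\<forall>xs. length xs = l \<longrightarrow> length (f xs) = n) \<and> (\<forall>xs. length xs \<noteq> l \<longrightarrow> f xs = [])"
    using assms
    by induction (auto simp: cid_def cface_def cdegen_def cconn_def ccomp_def)
  then show "length xs = l \<Longrightarrow> length (f xs) = n" and "length xs \<noteq> l \<Longrightarrow> f xs = []"
    by blast+
qed

lemma ccomp_assoc:
  "boxhom l m f \<Longrightarrow> ccomp l (ccomp m g h) f = ccomp l g (ccomp l h f)"
  by (auto simp: ccomp_def fun_eq_iff boxhom_length)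

lemma ccomp_cid_left: "boxhom l n f \<Longrightarrow> ccomp l (cid n) f = f"
  by (auto simp: ccomp_def cid_def fun_eq_iff boxhom_length)

lemma ccomp_cid_right: "boxhom l n f \<Longrightarrow> ccomp l f (cid l) = f"
  by (auto simp: ccomp_def cid_def fun_eq_iff boxhom_length)

lemma ccomp_eqI:
  "(\<And>xs. length xs = p \<Longrightarrow> g (f xs) = g' (f' xs)) \<Longrightarrow> ccomp p g f = ccomp p g' f'"
  by (auto simp: ccomp_def fun_eq_iff)

lemma ccomp_eq_cidI: "(\<And>xs. length xs = p \<Longrightarrow> g (f xs) = xs) \<Longrightarrow> ccomp p g f = cid p"
  by (auto simp: ccomp_def cid_def fun_eq_iff)

lemma cface_length [simp]: "length xs = p \<Longrightarrow> length (cface p i e xs) = Suc p"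
  by (auto simp: cface_def)

lemma cface_nth:
  "\<lbrakk>length xs = p; 1 \<le> i; i \<le> Suc p; q < Suc p\<rbrakk> \<Longrightarrow>
   cface p i e xs ! q = (if q < i - 1 then xs ! q else if q = i - 1 then e else xs ! (q - 1))"
  by (auto simp: cface_def nth_append min_def)

lemma cdegen_length [simp]:
  "\<lbrakk>length xs = Suc p; 1 \<le> i; i \<le> Suc p\<rbrakk> \<Longrightarrow> length (cdegen p i xs) = p"
  by (auto simp: cdegen_def)

lemma cdegen_nth:
  "\<lbrakk>length xs = Suc p; 1 \<le> i; i \<le> Suc p; q < p\<rbrakk> \<Longrightarrow>
   cdegen p i xs ! q = (if q < i - 1 then xs ! q else xs ! Suc q)"
  by (auto simp: cdegen_def nth_append min_def)

lemma cconn_length [simp]: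
  "\<lbrakk>length xs = Suc p; 1 \<le> i; i \<le> p\<rbrakk> \<Longrightarrow> length (cconn p i e xs) = p"
  by (auto simp: cconn_def)

lemma cconn_nth:
  "\<lbrakk>length xs = Suc p; 1 \<le> i; i \<le> p; q < p\<rbrakk> \<Longrightarrow>
   cconn p i e xs ! q = (if q < i - 1 then xs ! q else if q = i - 1 then
      (if e then xs ! (i - 1) \<or> xs ! i else xs ! (i - 1) \<and> xs ! i) else xs ! Suc q)"
  by (auto simp: cconn_def nth_append min_def nth_Cons')

definition degen_generator :: "nat \<Rightarrow> nat \<Rightarrow> cmor \<Rightarrow> bool" where
  "degen_generator l n g \<longleftrightarrow> l = Suc n \<and>
     ((\<exists>i. 1 \<le> i \<and> i \<le> Suc n \<and> g = cdegen n i) \<or> (\<exists>i e. 1 \<le> i \<and> i \<le> n \<and> g = cconn n i e))"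

lemma degen_generator_cdegen: "\<lbrakk>1 \<le> i; i \<le> Suc n\<rbrakk> \<Longrightarrow> degen_generator (Suc n) n (cdegen n i)"
  unfolding degen_generator_def by blast

lemma degen_generator_cconn: "\<lbrakk>1 \<le> i; i \<le> n\<rbrakk> \<Longrightarrow> degen_generator (Suc n) n (cconn n i e)"
  unfolding degen_generator_def by blast

lemma boxhom_degen_generator: "degen_generator l n g \<Longrightarrow> boxhom l n g"
  unfolding degen_generator_def by (auto intro: bh_degen bh_conn)

definition face_after_degen :: "nat \<Rightarrow> cmor \<Rightarrow> bool" where
  "face_after_degen p h \<longleftrightarrow> (\<exists>p' i e g. p = Suc p' \<and> 1 \<le> i \<and> i \<le> Suc p' \<and>
     degen_generator p p' g \<and> h = ccomp p (cface p' i e) g)"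

lemma face_after_degenI:
  "\<lbrakk>1 \<le> i; i \<le> Suc p; degen_generator (Suc p) p g\<rbrakk> \<Longrightarrow>
   face_after_degen (Suc p) (ccomp (Suc p) (cface p i e) g)"
  unfolding face_after_degen_def by blast

lemma cdegen_cface_same: "\<lbrakk>1 \<le> i; i \<le> Suc p\<rbrakk> \<Longrightarrow> ccomp p (cdegen p i) (cface p i e) = cid p"
  by (intro ccomp_eq_cidI nth_equalityI) (auto simp: cdegen_nth cface_nth)

lemma cdegen_cface_less:
  "\<lbrakk>1 \<le> i; i < j; j \<le> Suc (Suc p)\<rbrakk> \<Longrightarrow>
   ccomp (Suc p) (cdegen (Suc p) j) (cface (Suc p) i e) = ccomp (Suc p) (cface p i e) (cdegen p (j - 1))"
  by (intro ccomp_eqI nth_equalityI) (auto simp: cdegen_nth cface_nth)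

lemma cdegen_cface_greater:
  "\<lbrakk>1 \<le> j; j < i; i \<le> Suc (Suc p)\<rbrakk> \<Longrightarrow>
   ccomp (Suc p) (cdegen (Suc p) j) (cface (Suc p) i e) = ccomp (Suc p) (cface p (i - 1) e) (cdegen p j)"
  by (intro ccomp_eqI nth_equalityI) (auto simp: cdegen_nth cface_nth)

lemma cconn_cface_less:
  assumes "1 \<le> i" "i < j" "j \<le> Suc p"
  shows "ccomp (Suc p) (cconn (Suc p) j c) (cface (Suc p) i e) =
         ccomp (Suc p) (cface p i e) (cconn p (j - 1) c)"
proof (intro ccomp_eqI nth_equalityI)
  fix xs :: "bool list" and q assume "length xs = Suc p" "q < length (cconn (Suc p) j c (cface (Suc p) i e xs))"
  then show "cconn (Suc p) j c (cface (Suc p) i e xs) ! q = cface p i e (cconn p (j - 1) c xs) ! q"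
    using assms by (cases "q < i - 1"; cases "q = i - 1"; cases "q < j - 1"; cases "q = j - 1")
                   (auto simp: cconn_nth cface_nth)
qed (use assms in simp)

lemma cconn_cface_greater:
  assumes "1 \<le> j" "j + 1 < i" "i \<le> Suc (Suc p)"
  shows "ccomp (Suc p) (cconn (Suc p) j c) (cface (Suc p) i e) =
         ccomp (Suc p) (cface p (i - 1) e) (cconn p j c)"
proof (intro ccomp_eqI nth_equalityI)
  fix xs :: "bool list" and q assume "length xs = Suc p" "q < length (cconn (Suc p) j c (cface (Suc p) i e xs))"
  then show "cconn (Suc p) j c (cface (Suc p) i e xs) ! q = cface p (i - 1) e (cconn p j c xs) ! q"
    using assms
    by (cases "Suc q < i - 1"; cases "Suc q = i - 1"; cases "q < j - 1"; cases "q = j - 1";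
        simp add: cconn_nth cface_nth; (intro impI conjI allI; simp; linarith?)?)
qed (use assms in simp)

lemma cconn_cface_absorb:
  assumes "1 \<le> j" "j \<le> Suc p" "i = j \<or> i = j + 1"
  shows "ccomp (Suc p) (cconn (Suc p) j e) (cface (Suc p) i e) = ccomp (Suc p) (cface p j e) (cdegen p j)"
proof (intro ccomp_eqI nth_equalityI)
  fix xs :: "bool list" and q assume "length xs = Suc p" "q < length (cconn (Suc p) j e (cface (Suc p) i e xs))"
  then show "cconn (Suc p) j e (cface (Suc p) i e xs) ! q = cface p j e (cdegen p j xs) ! q"
    using assms by (cases "q < j - 1"; cases "q = j - 1"; cases "q = j")
                   (auto simp: cconn_nth cface_nth cdegen_nth split: if_splits)
qed (use assms in auto)

lemma cconn_cface_cancel: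
  assumes "1 \<le> j" "j \<le> p" "i = j \<or> i = j + 1" "c \<noteq> e"
  shows "ccomp p (cconn p j c) (cface p i e) = cid p"
proof (intro ccomp_eq_cidI nth_equalityI)
  fix xs :: "bool list" and q assume "length xs = p" "q < length (cconn p j c (cface p i e xs))"
  then show "cconn p j c (cface p i e xs) ! q = xs ! q"
    using assms by (cases "q < j - 1"; cases "q = j - 1"; cases "q = j")
                   (auto simp: cconn_nth cface_nth split: if_splits)
qed (use assms in auto)

lemma cdegen_comp_cface:
  assumes "1 \<le> j" "j \<le> Suc p" "1 \<le> i" "i \<le> Suc p"
  shows "ccomp p (cdegen p j) (cface p i e) = cid p \<or>
         face_after_degen p (ccomp p (cdegen p j) (cface p i e))"
proof -
  consider "i = j" | p' where "p = Suc p'" "i < j" | p' where "p = Suc p'" "j < i"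
    using assms by (cases p) (auto, linarith)
  then show ?thesis
  proof cases
    case 1
    then show ?thesis using assms by (simp add: cdegen_cface_same)
  next
    case (2 p')
    have "degen_generator (Suc p') p' (cdegen p' (j - 1))"
      by (rule degen_generator_cdegen) (use 2 assms in linarith)+
    then show ?thesis
      using 2 assms cdegen_cface_less[of i j p' e] face_after_degenI[of i p'] by auto
  next
    case (3 p')
    have "degen_generator (Suc p') p' (cdegen p' j)"
      by (rule degen_generator_cdegen) (use 3 assms in linarith)+
    then show ?thesis
      using 3 assms cdegen_cface_greater[of j i p' e] face_after_degenI[of "i - 1" p'] by auto
  qed
qed

lemma cconn_comp_cface:
  assumes "1 \<le> j" "j \<le> p" "1 \<le> i" "i \<le> Suc p"
  shows "ccomp p (cconn p j c) (cface p i e) = cid p \<or>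
         face_after_degen p (ccomp p (cconn p j c) (cface p i e))"
proof -
  obtain p' where p: "p = Suc p'" using assms by (cases p) auto
  consider "i < j" | "j + 1 < i" | "i = j \<or> i = j + 1" "c = e" | "i = j \<or> i = j + 1" "c \<noteq> e"
    by linarith
  then show ?thesis
  proof cases
    case 1
    have "degen_generator (Suc p') p' (cconn p' (j - 1) c)"
      by (rule degen_generator_cconn) (use 1 p assms in linarith)+
    then show ?thesis
      using 1 assms p cconn_cface_less[of i j p' c e] face_after_degenI[of i p'] by auto
  next
    case 2
    have "degen_generator (Suc p') p' (cconn p' j c)"
      by (rule degen_generator_cconn) (use 2 p assms in linarith)+
    then show ?thesis
      using 2 assms p cconn_cface_greater[of j i p' c e] face_after_degenI[of "i - 1" p'] by auto
  next
    case 3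
    have "degen_generator (Suc p') p' (cdegen p' j)"
      by (rule degen_generator_cdegen) (use p assms in linarith)+
    then show ?thesis
      using 3 assms p cconn_cface_absorb[of j p' i e] face_after_degenI[of j p'] by auto
  next
    case 4
    then show ?thesis using assms by (simp add: cconn_cface_cancel)
  qed
qed

lemma degen_generator_comp_cface:
  assumes "degen_generator (Suc p) p g" "1 \<le> i" "i \<le> Suc p"
  shows "ccomp p g (cface p i e) = cid p \<or> face_after_degen p (ccomp p g (cface p i e))"
  using assms(1) unfolding degen_generator_def
proof (elim conjE disjE exE)
  fix j assume "1 \<le> j" "j \<le> Suc p" "g = cdegen p j"
  then show ?thesis using cdegen_comp_cface[of j p i e] assms(2,3) by simp
next
  fix j c assume "1 \<le> j" "j \<le> p" "g = cconn p j c"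
  then show ?thesis using cconn_comp_cface[of j p i c e] assms(2,3) by simp
qed

text \<open>Every map of the box category has this form: a degeneracy or connection following a face
  can be moved in front of it by the cubical identities.\<close>

inductive nf_hom :: "nat \<Rightarrow> nat \<Rightarrow> cmor \<Rightarrow> bool" where
  nf_id: "nf_hom n n (cid n)"
| nf_face: "\<lbrakk>nf_hom l n y; 1 \<le> i; i \<le> Suc n\<rbrakk> \<Longrightarrow> nf_hom l (Suc n) (ccomp l (cface n i e) y)"
| nf_degen: "\<lbrakk>degen_generator l l' g; nf_hom l' n y\<rbrakk> \<Longrightarrow> nf_hom l n (ccomp l y g)"

lemma boxhom_if_nf_hom: "nf_hom l n f \<Longrightarrow> boxhom l n f"
proof (induction rule: nf_hom.induct)
  case (nf_face l n y i e)
  then show ?case by (blast intro: bh_comp bh_face)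
qed (auto intro: bh_id bh_comp boxhom_degen_generator)

lemma nf_hom_degen_generator_comp:
  "nf_hom l m f \<Longrightarrow> degen_generator m n g \<Longrightarrow> nf_hom l n (ccomp l g f)"
proof (induction arbitrary: n g rule: nf_hom.induct)
  case (nf_id m)
  have "ccomp m g (cid m) = ccomp m (cid n) g"
    using boxhom_degen_generator[OF nf_id] by (simp add: ccomp_cid_left ccomp_cid_right)
  then show ?case using nf_id by (simp add: nf_hom.nf_degen nf_hom.nf_id)
next
  case (nf_face l m y i e)
  have n: "n = m" using nf_face.prems by (simp add: degen_generator_def)
  have y: "boxhom l m y" using nf_face.hyps(1) by (rule boxhom_if_nf_hom)
  have assoc: "ccomp l g (ccomp l (cface m i e) y) = ccomp l (ccomp m g (cface m i e)) y"
    using ccomp_assoc[OF y] by simp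
  from degen_generator_comp_cface[of m g i e] nf_face.prems nf_face.hyps n
  consider "ccomp m g (cface m i e) = cid m" | "face_after_degen m (ccomp m g (cface m i e))"
    by auto
  then show ?case
  proof cases
    case 1
    then show ?thesis using assoc n nf_face.hyps(1) by (simp add: ccomp_cid_left[OF y])
  next
    case 2
    then obtain m' i' e' g' where g': "m = Suc m'" "1 \<le> i'" "i' \<le> Suc m'"
      "degen_generator m m' g'" "ccomp m g (cface m i e) = ccomp m (cface m' i' e') g'"
      unfolding face_after_degen_def by blast
    have "nf_hom l (Suc m') (ccomp l (cface m' i' e') (ccomp l g' y))"
      using nf_face.IH[OF g'(4)] g'(2,3) by (rule nf_hom.nf_face)
    moreover have "ccomp l (ccomp m (cface m' i' e') g') y = ccomp l (cface m' i' e') (ccomp l g' y)"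
      by (rule ccomp_assoc[OF y])
    ultimately show ?thesis using assoc g' n by simp
  qed
next
  case (nf_degen l l' g' m y)
  have "boxhom l l' g'" using nf_degen.hyps(1) by (rule boxhom_degen_generator)
  then have "ccomp l g (ccomp l y g') = ccomp l (ccomp l' g y) g'"
    by (simp add: ccomp_assoc)
  then show ?case using nf_degen by (simp add: nf_hom.nf_degen)
qed

lemma nf_hom_comp: "nf_hom m n g \<Longrightarrow> nf_hom l m f \<Longrightarrow> nf_hom l n (ccomp l g f)"
proof (induction arbitrary: f rule: nf_hom.induct)
  case (nf_id n)
  then show ?case by (simp add: ccomp_cid_left boxhom_if_nf_hom)
next
  case (nf_face m n y i e)
  have "ccomp l (ccomp m (cface n i e) y) f = ccomp l (cface n i e) (ccomp l y f)"
    using nf_face.prems by (simp add: ccomp_assoc boxhom_if_nf_hom)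
  then show ?case using nf_face by (simp add: nf_hom.nf_face)
next
  case (nf_degen m m' g n y)
  have "ccomp l (ccomp m y g) f = ccomp l y (ccomp l g f)"
    using nf_degen.prems by (simp add: ccomp_assoc boxhom_if_nf_hom)
  then show ?case
    using nf_degen by (simp add: nf_hom_degen_generator_comp)
qed

lemma nf_hom_if_boxhom: "boxhom l n f \<Longrightarrow> nf_hom l n f"
proof (induction rule: boxhom.induct)
  case (bh_face i n e)
  then show ?case
    using nf_hom.nf_face[OF nf_id, of i n e] by (simp add: ccomp_cid_right[OF boxhom.bh_face])
next
  case (bh_degen i n)
  then show ?case
    using nf_hom_degen_generator_comp[OF nf_id degen_generator_cdegen]
    by (simp add: ccomp_cid_right[OF boxhom.bh_degen])
next
  case (bh_conn i n e)
  then show ?case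
    using nf_hom_degen_generator_comp[OF nf_id degen_generator_cconn]
    by (simp add: ccomp_cid_right[OF boxhom.bh_conn])
qed (auto intro: nf_hom.nf_id nf_hom_comp)

definition degenerate_hom :: "nat \<Rightarrow> nat \<Rightarrow> cmor \<Rightarrow> bool" where
  "degenerate_hom l n f \<longleftrightarrow> (\<exists>l' g y. degen_generator l l' g \<and> boxhom l' n y \<and> f = ccomp l y g)"

lemma degenerate_hom_face:
  assumes "degenerate_hom l n y" "1 \<le> i" "i \<le> Suc n"
  shows "degenerate_hom l (Suc n) (ccomp l (cface n i e) y)"
proof -
  obtain l' g y' where y: "degen_generator l l' g" "boxhom l' n y'" "y = ccomp l y' g"
    using assms(1) unfolding degenerate_hom_def by blast
  have "ccomp l (cface n i e) y = ccomp l (ccomp l' (cface n i e) y') g"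
    using y ccomp_assoc[OF boxhom_degen_generator[OF y(1)]] by simp
  moreover have "boxhom l' (Suc n) (ccomp l' (cface n i e) y')"
    using y(2) bh_face[OF assms(2,3)] by (rule bh_comp)
  ultimately show ?thesis unfolding degenerate_hom_def using y(1) by blast
qed

lemma degenerate_hom_if_less:
  assumes "boxhom l n f" "n < l"
  shows "degenerate_hom l n f"
  using nf_hom_if_boxhom[OF assms(1)] assms(2)
proof (induction rule: nf_hom.induct)
  case (nf_face l n y i e)
  then show ?case by (simp add: degenerate_hom_face)
next
  case (nf_degen l l' g n y)
  then show ?case unfolding degenerate_hom_def by (blast intro: boxhom_if_nf_hom)
qed simp

lemma boxhom_self_cases:
  assumes "boxhom l l f"
  shows "f = cid l \<or> degenerate_hom l l f"
  using nf_hom_if_boxhom[OF assms]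
proof (cases rule: nf_hom.cases)
  case (nf_face n y i e)
  have "degenerate_hom l n y"
    using nf_face by (simp add: degenerate_hom_if_less boxhom_if_nf_hom)
  then show ?thesis using nf_face by (simp add: degenerate_hom_face)
next
  case (nf_degen l' g y)
  then show ?thesis unfolding degenerate_hom_def by (blast intro: boxhom_if_nf_hom)
qed simp

lemma boxhom_Suc_cases:
  assumes "boxhom p (Suc p) x"
  shows "(\<exists>j e y. 1 \<le> j \<and> j \<le> Suc p \<and> boxhom p p y \<and> x = ccomp p (cface p j e) y) \<or>
         degenerate_hom p (Suc p) x"
  using nf_hom_if_boxhom[OF assms]
proof (cases rule: nf_hom.cases)
  case (nf_face y i e)
  then show ?thesis by (blast intro: boxhom_if_nf_hom)
next
  case (nf_degen l' g y)
  then show ?thesis unfolding degenerate_hom_def by (blast intro: boxhom_if_nf_hom)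
qed simp

lemma cells_cube_base [simp]: "cells (cube_base m) = (\<lambda>d. {x. boxhom d m x})"
  and act_cube_base [simp]: "act (cube_base m) = (\<lambda>p d f x. ccomp p x f)"
  by (simp_all add: cube_base_def)

lemma cells_cube_mk [simp]: "cells (cube_mk m k eps) = (\<lambda>d. {x. boxhom d m x})"
  and act_cube_mk [simp]: "act (cube_mk m k eps) = (\<lambda>p d f x. ccomp p x f)"
  by (simp_all add: cube_mk_def cube_base_def)

lemma cells_obox [simp]: "cells (obox m k eps) = obox_cells m k eps"
  and act_obox [simp]: "act (obox m k eps) = (\<lambda>p d f x. ccomp p x f)"
  and marked_obox [simp]: "marked (obox m k eps) d = marked (cube_mk m k eps) d \<inter> obox_cells m k eps d"
  by (simp_all add: obox_def)

lemma cells_tau [simp]: "cells (tau j X) = cells X"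
  and act_tau [simp]: "act (tau j X) = act X"
  and marked_tau [simp]: "marked (tau j X) d = marked X d \<union> (if j + 1 \<le> d then cells X d else {})"
  by (simp_all add: tau_def)

lemma cells_cube_mk' [simp]: "cells (cube_mk' m k eps) = (\<lambda>d. {x. boxhom d m x})"
  and act_cube_mk' [simp]: "act (cube_mk' m k eps) = (\<lambda>p d f x. ccomp p x f)"
  and marked_cube_mk' [simp]: "marked (cube_mk' m k eps) d = marked (cube_mk m k eps) d \<union>
      (if d = m - 1 then {x. boxhom d m x} - {cface (m - 1) k eps} else {})"
  by (simp_all add: cube_mk'_def)

lemma marked_cube_mkD: "x \<in> marked (cube_mk m k eps) d \<Longrightarrow> boxhom d m x \<and> 0 < d"
  by (simp add: cube_mk_def)

lemma boxhom_if_obox_cells: "x \<in> obox_cells m k eps d \<Longrightarrow> boxhom d m x"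
  by (simp add: obox_cells_def)

lemma degenerate_hom_if_degenerate:
  assumes "act X = (\<lambda>p d f x. ccomp p x f)" "\<And>d. cells X d \<subseteq> {x. boxhom d m x}"
    and "degenerate X d x"
  shows "degenerate_hom d m x"
proof -
  obtain d' y where y: "d = Suc d'" "y \<in> cells X d'"
    "(\<exists>i. 1 \<le> i \<and> i \<le> Suc d' \<and> x = act X (Suc d') d' (cdegen d' i) y) \<or>
     (\<exists>i e. 1 \<le> i \<and> i \<le> d' \<and> x = act X (Suc d') d' (cconn d' i e) y)"
    using assms(3) unfolding degenerate_def by blast
  have "boxhom d' m y" using y(2) assms(2) by blast
  from y(3) show ?thesis
    unfolding assms(1)
  proof (elim disjE exE conjE)
    fix i assume "1 \<le> i" "i \<le> Suc d'" "x = ccomp (Suc d') y (cdegen d' i)"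
    then show ?thesis
      using \<open>boxhom d' m y\<close> y(1) unfolding degenerate_hom_def
      by (blast intro: degen_generator_cdegen)
  next
    fix i e assume "1 \<le> i" "i \<le> d'" "x = ccomp (Suc d') y (cconn d' i e)"
    then show ?thesis
      using \<open>boxhom d' m y\<close> y(1) unfolding degenerate_hom_def
      by (blast intro: degen_generator_cconn)
  qed
qed

lemma marked_cube_mk_if_degenerate_hom:
  assumes "degenerate_hom d m x"
  shows "x \<in> marked (cube_mk m k eps) d"
proof -
  obtain d' g y where y: "degen_generator d d' g" "boxhom d' m y" "x = ccomp d y g"
    using assms unfolding degenerate_hom_def by blast
  have "d = Suc d'" using y(1) by (simp add: degen_generator_def)
  moreover have "boxhom d m x" using y by (blast intro: boxhom_degen_generator bh_comp)
  moreover have "degenerate (cube_base m) d x"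
    using y \<open>d = Suc d'\<close> unfolding degenerate_def degen_generator_def by auto
  ultimately show ?thesis by (simp add: cube_mk_def)
qed

lemma is_cset_subcube:
  assumes "act X = (\<lambda>p d f x. ccomp p x f)" "\<And>d. cells X d \<subseteq> {x. boxhom d m x}"
    and "\<And>p d f x. boxhom p d f \<Longrightarrow> x \<in> cells X d \<Longrightarrow> ccomp p x f \<in> cells X p"
  shows "is_cset X"
  unfolding is_cset_def assms(1)
proof (intro conjI allI impI)
  fix d x assume "x \<in> cells X d"
  then show "ccomp d x (cid d) = x" using assms(2) ccomp_cid_right by blast
next
  fix l p d f g x assume "boxhom l p f" "boxhom p d g"
  then show "ccomp l x (ccomp l g f) = ccomp l (ccomp p x g) f" by (simp add: ccomp_assoc)
qed (use assms(3) in blast)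

lemma is_mcset_cube_mk: "is_mcset (cube_mk m k eps)"
  unfolding is_mcset_def
proof (intro conjI allI impI)
  show "is_cset (cube_mk m k eps)" by (rule is_cset_subcube[where m = m]) (auto intro: bh_comp)
  show "marked (cube_mk m k eps) 0 = {}" by (simp add: cube_mk_def)
  fix d show "marked (cube_mk m k eps) d \<subseteq> cells (cube_mk m k eps) d"
    using marked_cube_mkD by auto
next
  fix d x assume "x \<in> cells (cube_mk m k eps) d" "degenerate (cube_mk m k eps) d x"
  then have "degenerate_hom d m x" by (intro degenerate_hom_if_degenerate[where X = "cube_mk m k eps"]) auto
  then show "x \<in> marked (cube_mk m k eps) d" by (rule marked_cube_mk_if_degenerate_hom)
qed

lemma obox_cells_comp:
  assumes f: "boxhom p d f" and x: "x \<in> obox_cells m k eps d"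
  shows "ccomp p x f \<in> obox_cells m k eps p"
proof -
  obtain j e y where y: "1 \<le> j" "j \<le> m" "(j, e) \<noteq> (k, eps)" "boxhom d (m - 1) y"
    "x = ccomp d (cface (m - 1) j e) y" using x unfolding obox_cells_def by blast
  have "ccomp p x f = ccomp p (cface (m - 1) j e) (ccomp p y f)"
    using y ccomp_assoc[OF f] by simp
  moreover have "boxhom p (m - 1) (ccomp p y f)" using f y(4) by (rule bh_comp)
  moreover have "boxhom p m (ccomp p x f)" using f boxhom_if_obox_cells[OF x] by (rule bh_comp)
  ultimately show ?thesis unfolding obox_cells_def using y by blast
qed

lemma is_mcset_obox: "is_mcset (obox m k eps)"
  unfolding is_mcset_def
proof (intro conjI allI impI)
  show "is_cset (obox m k eps)"
    by (rule is_cset_subcube[where m = m]) (auto intro: obox_cells_comp boxhom_if_obox_cells)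
  show "marked (obox m k eps) 0 = {}" by (simp add: cube_mk_def)
  fix d show "marked (obox m k eps) d \<subseteq> cells (obox m k eps) d" by auto
next
  fix d x assume x: "x \<in> cells (obox m k eps) d" "degenerate (obox m k eps) d x"
  then have "degenerate_hom d m x"
    by (intro degenerate_hom_if_degenerate[where X = "obox m k eps"]) (auto intro: boxhom_if_obox_cells)
  with x show "x \<in> marked (obox m k eps) d" by (simp add: marked_cube_mk_if_degenerate_hom)
qed

lemma is_mcset_more_marked:
  assumes "is_mcset X" "cells Y = cells X" "act Y = act X" "marked Y 0 = {}"
    and "\<And>d. marked X d \<subseteq> marked Y d" "\<And>d. marked Y d \<subseteq> cells Y d"
  shows "is_mcset Y"
proof -
  have "is_cset Y" using assms(1-3) unfolding is_mcset_def is_cset_def by simp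
  have degenerate_eq: "degenerate Y = degenerate X"
    unfolding degenerate_def[abs_def] assms(2,3) ..
  have "x \<in> marked Y d" if "x \<in> cells Y d" "degenerate Y d x" for d x
    using that assms(1,5) unfolding is_mcset_def assms(2) degenerate_eq by blast
  with \<open>is_cset Y\<close> assms(4,6) show ?thesis unfolding is_mcset_def by blast
qed

lemma is_mcset_tau: "is_mcset X \<Longrightarrow> is_mcset (tau j X)"
  by (rule is_mcset_more_marked[where X = X]) (auto simp: is_mcset_def)

lemma is_mcset_cube_mk': "2 \<le> m \<Longrightarrow> is_mcset (cube_mk' m k eps)"
  by (rule is_mcset_more_marked[where X = "cube_mk m k eps"])
     (auto simp: is_mcset_cube_mk marked_cube_mkD, simp add: cube_mk_def)

lemma is_mmap_inclusion:
  "\<lbrakk>\<And>d. cells X d \<subseteq> cells Y d; \<And>d. marked X d \<subseteq> marked Y d; act X = act Y\<rbrakk> \<Longrightarrow>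
   is_mmap X Y (\<lambda>d x. x)"
  unfolding is_mmap_def by auto

lemma is_miso_id: "is_mcset X \<Longrightarrow> is_miso X X (\<lambda>d x. x)"
  unfolding is_miso_def by (auto intro: is_mmap_inclusion simp: bij_betw_def)

section \<open>The open box inclusion after truncation\<close>

lemma comical_obox:
  assumes "1 \<le> m" "1 \<le> k" "k \<le> m"
  shows "comical (obox m k eps) (cube_mk m k eps) (\<lambda>d x. x)"
proof (rule gen_openbox[where m = m and k = k and eps = eps and u = "\<lambda>d x. x" and v = "\<lambda>d x. x"])
  show "is_mmap (obox m k eps) (cube_mk m k eps) (\<lambda>d x. x)"
    by (rule is_mmap_inclusion) (auto intro: boxhom_if_obox_cells)
qed (use assms in \<open>auto intro: is_miso_id is_mcset_obox is_mcset_cube_mk\<close>)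

lemma comical_cube_mk'_cube_mk'':
  assumes "2 \<le> m" "1 \<le> k" "k \<le> m"
  shows "comical (cube_mk' m k eps) (cube_mk'' m k eps) (\<lambda>d x. x)"
proof (rule gen_marking[where m = m and k = k and eps = eps and u = "\<lambda>d x. x" and v = "\<lambda>d x. x"])
  show "is_mmap (cube_mk' m k eps) (cube_mk'' m k eps) (\<lambda>d x. x)"
    using assms by (intro is_mmap_inclusion) (auto simp: cube_mk''_def)
qed (use assms in \<open>auto intro: is_miso_id is_mcset_cube_mk' is_mcset_tau is_mcset_cube_mk
                    simp: cube_mk''_def\<close>)

lemma cface_comp_neq_cface:
  assumes "1 \<le> j" "j \<le> Suc p" "1 \<le> k" "k \<le> Suc p" "(j, e) \<noteq> (k, eps)" "boxhom p p y"
  shows "ccomp p (cface p j e) y \<noteq> cface p k eps"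
proof
  assume eq: "ccomp p (cface p j e) y = cface p k eps"
  define xs where "xs = replicate p (\<not> e)"
  have "length xs = p" "length (y xs) = p"
    using boxhom_length(1)[OF assms(6)] by (simp_all add: xs_def)
  then have "ccomp p (cface p j e) y xs ! (j - 1) \<noteq> cface p k eps xs ! (j - 1)"
    using assms by (auto simp: ccomp_def cface_nth xs_def)
  with eq show False by simp
qed

lemma marked_tau_obox_subset:
  assumes "2 \<le> m" "1 \<le> k" "k \<le> m"
  shows "marked (tau (m - 2) (obox m k eps)) d \<subseteq> marked (cube_mk' m k eps) d"
proof
  fix x assume x: "x \<in> marked (tau (m - 2) (obox m k eps)) d"
  show "x \<in> marked (cube_mk' m k eps) d"
  proof (cases "x \<in> marked (cube_mk m k eps) d")
    case False
    with x have "m - 1 \<le> d" and "x \<in> obox_cells m k eps d"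
      using assms(1) by (auto split: if_splits)
    then obtain j e y where y: "1 \<le> j" "j \<le> m" "(j, e) \<noteq> (k, eps)" "boxhom d (m - 1) y"
      "x = ccomp d (cface (m - 1) j e) y" unfolding obox_cells_def by blast
    show ?thesis
    proof (cases "d = m - 1")
      case True
      obtain p where m: "m = Suc p" using assms(1) by (cases m) auto
      have "x \<noteq> cface p k eps"
        using cface_comp_neq_cface[of j p k e eps y] y assms True m by simp
      moreover have "boxhom d m x"
        using \<open>x \<in> obox_cells m k eps d\<close> by (rule boxhom_if_obox_cells)
      ultimately show ?thesis using True m by simp
    next
      case False
      then have "degenerate_hom d (m - 1) y"
        using \<open>m - 1 \<le> d\<close> y(4) by (intro degenerate_hom_if_less) auto
      then have "degenerate_hom d (Suc (m - 1)) x"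
        unfolding y(5) using y(1,2) by (intro degenerate_hom_face) auto
      then show ?thesis using assms(1) by (simp add: marked_cube_mk_if_degenerate_hom)
    qed
  qed simp
qed

lemma marked_cube_mk'_cases:
  assumes "1 \<le> m" "x \<in> marked (cube_mk' m k eps) d"
  shows "x \<in> marked (cube_mk m k eps) d \<or> (d = m - 1 \<and> x \<in> obox_cells m k eps d)"
proof (cases "x \<in> marked (cube_mk m k eps) d")
  case unmarked: False
  obtain p where m: "m = Suc p" using assms(1) by (cases m) auto
  with assms(2) unmarked have d: "d = p" and x: "boxhom p (Suc p) x" "x \<noteq> cface p k eps"
    by (auto split: if_splits)
  from boxhom_Suc_cases[OF x(1)] have "d = m - 1 \<and> x \<in> obox_cells m k eps d"
  proof (elim disjE exE conjE)
    fix j e y assume y: "1 \<le> j" "j \<le> Suc p" "boxhom p p y" "x = ccomp p (cface p j e) y"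
    have "(j, e) \<noteq> (k, eps)"
    proof
      assume "(j, e) = (k, eps)"
      with boxhom_self_cases[OF y(3)] consider "x = cface p k eps" | "degenerate_hom p (Suc p) x"
        using y ccomp_cid_right[OF bh_face] degenerate_hom_face by fastforce
      then show False
        using x(2) unmarked marked_cube_mk_if_degenerate_hom d m by cases auto
    qed
    then show ?thesis unfolding obox_cells_def using x(1) y m d by auto
  next
    assume "degenerate_hom p (Suc p) x"
    then show ?thesis using unmarked marked_cube_mk_if_degenerate_hom d m by auto
  qed
  then show ?thesis ..
qed simp

lemma is_mmap_cube_mk'_if_agrees_on_obox:
  assumes "2 \<le> m" and p: "is_mmap (cube_mk m k eps) E p"
    and q: "is_mmap (tau (m - 2) (obox m k eps)) E q" and "eq_map (obox m k eps) p q"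
  shows "is_mmap (cube_mk' m k eps) E p"
  unfolding is_mmap_def
proof (intro conjI allI impI)
  fix d x assume "x \<in> marked (cube_mk' m k eps) d"
  then consider "x \<in> marked (cube_mk m k eps) d" | "d = m - 1" "x \<in> obox_cells m k eps d"
    using assms(1) marked_cube_mk'_cases[of m] by fastforce
  then show "p d x \<in> marked E d"
  proof cases
    case 1
    then show ?thesis using p unfolding is_mmap_def by blast
  next
    case 2
    moreover have "m - 2 + 1 \<le> d" using 2 assms(1) by linarith
    ultimately have "x \<in> marked (tau (m - 2) (obox m k eps)) d" by simp
    then have "q d x \<in> marked E d" using q unfolding is_mmap_def by blast
    with 2 assms(4) show ?thesis unfolding eq_map_def by simp
  qed
qed (use p in \<open>simp_all add: is_mmap_def\<close>)

lemma is_pushout_cube_mk':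
  assumes "2 \<le> m" "1 \<le> k" "k \<le> m"
  shows "is_pushout (obox m k eps) (cube_mk m k eps) (tau (m - 2) (obox m k eps)) (cube_mk' m k eps)
           (\<lambda>d x. x) (\<lambda>d x. x) (\<lambda>d x. x) (\<lambda>d x. x)"
  unfolding is_pushout_def
proof (intro conjI allI impI)
  show "is_mcset (obox m k eps)" "is_mcset (cube_mk m k eps)" "is_mcset (tau (m - 2) (obox m k eps))"
    "is_mcset (cube_mk' m k eps)"
    using assms(1) by (simp_all add: is_mcset_obox is_mcset_cube_mk is_mcset_tau is_mcset_cube_mk')
  show "is_mmap (obox m k eps) (cube_mk m k eps) (\<lambda>d x. x)"
    "is_mmap (obox m k eps) (tau (m - 2) (obox m k eps)) (\<lambda>d x. x)"
    "is_mmap (cube_mk m k eps) (cube_mk' m k eps) (\<lambda>d x. x)"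
    by (auto intro!: is_mmap_inclusion boxhom_if_obox_cells)
  show "is_mmap (tau (m - 2) (obox m k eps)) (cube_mk' m k eps) (\<lambda>d x. x)"
    by (rule is_mmap_inclusion[OF _ marked_tau_obox_subset[OF assms]])
       (auto intro: boxhom_if_obox_cells)
  show "eq_map (obox m k eps) (mcomp (\<lambda>d x. x) (\<lambda>d x. x)) (mcomp (\<lambda>d x. x) (\<lambda>d x. x))"
    by (simp add: eq_map_def)
next
  fix E :: "cmor mcset" and p q
  assume "is_mmap (cube_mk m k eps) E p" "is_mmap (tau (m - 2) (obox m k eps)) E q"
    and "eq_map (obox m k eps) (mcomp p (\<lambda>d x. x)) (mcomp q (\<lambda>d x. x))"
  then have "is_mmap (cube_mk' m k eps) E p"
    using assms(1) is_mmap_cube_mk'_if_agrees_on_obox by (simp add: mcomp_def)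
  then show "\<exists>u. is_mmap (cube_mk' m k eps) E u \<and>
          eq_map (cube_mk m k eps) (mcomp u (\<lambda>d x. x)) p \<and>
          eq_map (tau (m - 2) (obox m k eps)) (mcomp u (\<lambda>d x. x)) q \<and>
          (\<forall>u'. is_mmap (cube_mk' m k eps) E u' \<and> eq_map (cube_mk m k eps) (mcomp u' (\<lambda>d x. x)) p \<and>
                eq_map (tau (m - 2) (obox m k eps)) (mcomp u' (\<lambda>d x. x)) q \<longrightarrow>
                eq_map (cube_mk' m k eps) u u')"
    using \<open>eq_map (obox m k eps) _ _\<close> by (intro exI[of _ p]) (auto simp: eq_map_def mcomp_def)
qed

lemma comical_tau_obox_cube_mk':
  assumes "2 \<le> m" "1 \<le> k" "k \<le> m"
  shows "comical (tau (m - 2) (obox m k eps)) (cube_mk' m k eps) (\<lambda>d x. x)"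
  by (rule pushout[OF comical_obox is_pushout_cube_mk'[OF assms]]) (use assms in auto)

section \<open>Composition of comical maps\<close>

definition three_order :: "'i \<Rightarrow> 'i \<Rightarrow> 'i \<Rightarrow> 'i rel" where
  "three_order a0 a1 a2 = {(a0, a0), (a0, a1), (a0, a2), (a1, a1), (a1, a2), (a2, a2)}"

lemma three_order_eq_dir_image:
  "three_order a0 a1 a2 = dir_image (natLeq_on 3) (nth [a0, a1, a2])"
proof -
  have natLeq_on_3: "natLeq_on 3 = {(0, 0), (0, 1), (0, 2), (1, 1), (1, 2), (2, 2)}"
    by (auto simp: numeral_3_eq_3 less_Suc_eq)
  have dir_image_eq: "dir_image r f = map_prod f f ` r" for r and f :: "nat \<Rightarrow> 'i"
    unfolding dir_image_def by auto
  show ?thesis unfolding three_order_def natLeq_on_3 dir_image_eq by simp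
qed

lemma Well_order_three_order:
  assumes "distinct [a0, a1, a2]"
  shows "Well_order (three_order a0 a1 a2)"
  unfolding three_order_eq_dir_image
proof (rule Well_order_dir_image[OF natLeq_on_Well_order])
  show "inj_on (nth [a0, a1, a2]) (Field (natLeq_on 3))"
    using assms by (auto simp: Field_natLeq_on inj_on_def nth_eq_iff_index_eq)
qed

lemma Field_three_order: "Field (three_order a0 a1 a2) = {a0, a1, a2}"
  unfolding three_order_def Field_def by auto

lemma wo_least_three_order: "wo_least (three_order a0 a1 a2) a0"
  unfolding wo_least_def Field_three_order by (auto simp: three_order_def)

lemma wo_succ_three_order:
  assumes "distinct [a0, a1, a2]"
  shows "wo_succ (three_order a0 a1 a2) a b \<longleftrightarrow> (a, b) = (a0, a1) \<or> (a, b) = (a1, a2)"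
  using assms unfolding wo_succ_def three_order_def by auto

lemma not_wo_limit_three_order:
  assumes "distinct [a0, a1, a2]"
  shows "\<not> wo_limit (three_order a0 a1 a2) b"
  using assms unfolding wo_limit_def wo_succ_three_order[OF assms]
  by (auto simp: three_order_def)

lemma comical_imp_is_mmap:
  assumes "comical A B F"
  shows "is_mcset A \<and> is_mcset B \<and> is_mmap A B F"
  using assms
proof induction
  case (transfinite r Z Phi a0 Y psi)
  then have "a0 \<in> Field r" by (simp add: wo_least_def)
  with transfinite.hyps show ?case by (simp add: is_chain_def is_colimit_def)
qed (auto simp: is_miso_def is_pushout_def)

lemma is_mmap_mcomp: "is_mmap A B F \<Longrightarrow> is_mmap B C G \<Longrightarrow> is_mmap A C (mcomp G F)"
  unfolding is_mmap_def mcomp_def by auto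

definition comp_chain :: "'i \<Rightarrow> 'i \<Rightarrow> 'a mcset \<Rightarrow> 'a mcset \<Rightarrow> 'a mcset \<Rightarrow> 'i \<Rightarrow> 'a mcset" where
  "comp_chain a0 a1 A B C a = (if a = a0 then A else if a = a1 then B else C)"

definition comp_chain_map ::
    "'i \<Rightarrow> 'i \<Rightarrow> 'i \<Rightarrow> (nat \<Rightarrow> 'a \<Rightarrow> 'a) \<Rightarrow> (nat \<Rightarrow> 'a \<Rightarrow> 'a) \<Rightarrow> 'i \<Rightarrow> 'i \<Rightarrow> nat \<Rightarrow> 'a \<Rightarrow> 'a" where
  "comp_chain_map a0 a1 a2 F G a b = (if a = b then (\<lambda>d x. x) else if (a, b) = (a0, a1) then F
     else if (a, b) = (a1, a2) then G else mcomp G F)"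

context
  fixes a0 a1 a2 :: 'i and A B C :: "'a mcset" and F G :: "nat \<Rightarrow> 'a \<Rightarrow> 'a"
  assumes three: "distinct [a0, a1, a2]"
    and mcsets: "is_mcset A" "is_mcset B" "is_mcset C"
    and maps: "is_mmap A B F" "is_mmap B C G"
begin

private lemma comp_chain_simps [simp]:
  "comp_chain a0 a1 A B C a0 = A" "comp_chain a0 a1 A B C a1 = B" "comp_chain a0 a1 A B C a2 = C"
  "comp_chain_map a0 a1 a2 F G a a = (\<lambda>d x. x)" "comp_chain_map a0 a1 a2 F G a0 a1 = F"
  "comp_chain_map a0 a1 a2 F G a1 a2 = G" "comp_chain_map a0 a1 a2 F G a0 a2 = mcomp G F"
  using three by (auto simp: comp_chain_def comp_chain_map_def)

private lemma three_order_cases: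
  "(a, b) \<in> three_order a0 a1 a2 \<longleftrightarrow>
   a = b \<and> a \<in> {a0, a1, a2} \<or> (a, b) \<in> {(a0, a1), (a1, a2), (a0, a2)}"
  unfolding three_order_def by auto

private lemma mcomp_id [simp]: "mcomp H (\<lambda>d x. x) = H" "mcomp (\<lambda>d x. x) H = H"
  by (simp_all add: mcomp_def)

private lemma is_mmap_id: "is_mmap X X (\<lambda>d x. x)"
  by (rule is_mmap_inclusion) auto

private lemma is_mmap_comp: "is_mmap A C (mcomp G F)"
  using maps by (rule is_mmap_mcomp)

lemma is_chain_comp_chain:
  "is_chain (three_order a0 a1 a2) (comp_chain a0 a1 A B C) (comp_chain_map a0 a1 a2 F G)"
  unfolding is_chain_def
proof (intro conjI ballI allI impI)
  show "Well_order (three_order a0 a1 a2)" using three by (rule Well_order_three_order)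
  fix a b c
  assume "(a, b) \<in> three_order a0 a1 a2" "(b, c) \<in> three_order a0 a1 a2"
  then show "eq_map (comp_chain a0 a1 A B C a) (comp_chain_map a0 a1 a2 F G a c)
               (mcomp (comp_chain_map a0 a1 a2 F G b c) (comp_chain_map a0 a1 a2 F G a b))"
    using three unfolding three_order_cases by (auto simp: eq_map_def)
next
  fix ab assume "ab \<in> three_order a0 a1 a2"
  then show "case ab of (a, b) \<Rightarrow>
      is_mmap (comp_chain a0 a1 A B C a) (comp_chain a0 a1 A B C b) (comp_chain_map a0 a1 a2 F G a b)"
    using maps by (cases ab) (auto simp: three_order_cases is_mmap_id is_mmap_comp)
next
  fix a assume "a \<in> Field (three_order a0 a1 a2)"
  then show "is_mcset (comp_chain a0 a1 A B C a)"
    "eq_map (comp_chain a0 a1 A B C a) (comp_chain_map a0 a1 a2 F G a a) (\<lambda>n x. x)"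
    using mcsets by (auto simp: Field_three_order eq_map_def)
qed

lemma is_colimit_comp_chain:
  "is_colimit (three_order a0 a1 a2) (Field (three_order a0 a1 a2))
     (comp_chain a0 a1 A B C) (comp_chain_map a0 a1 a2 F G) C (\<lambda>a. comp_chain_map a0 a1 a2 F G a a2)"
  unfolding is_colimit_def Field_three_order
proof (intro conjI ballI allI impI)
  show "is_mcset C" by (rule mcsets)
next
  fix a assume "a \<in> {a0, a1, a2}"
  then show "is_mmap (comp_chain a0 a1 A B C a) C (comp_chain_map a0 a1 a2 F G a a2)"
    using maps by (auto simp: is_mmap_id is_mmap_comp)
next
  fix a b assume "(a, b) \<in> three_order a0 a1 a2"
  then show "eq_map (comp_chain a0 a1 A B C a)
               (mcomp (comp_chain_map a0 a1 a2 F G b a2) (comp_chain_map a0 a1 a2 F G a b))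
               (comp_chain_map a0 a1 a2 F G a a2)"
    unfolding three_order_cases by (auto simp: eq_map_def)
next
  fix E :: "'a mcset" and chi
  assume chi: "\<forall>a\<in>{a0, a1, a2}. is_mmap (comp_chain a0 a1 A B C a) E (chi a)"
    and compatible: "\<forall>a\<in>{a0, a1, a2}. \<forall>b\<in>{a0, a1, a2}. (a, b) \<in> three_order a0 a1 a2 \<longrightarrow>
       eq_map (comp_chain a0 a1 A B C a) (mcomp (chi b) (comp_chain_map a0 a1 a2 F G a b)) (chi a)"
  show "\<exists>u. is_mmap C E u \<and>
      (\<forall>a\<in>{a0, a1, a2}. eq_map (comp_chain a0 a1 A B C a)
         (mcomp u (comp_chain_map a0 a1 a2 F G a a2)) (chi a)) \<and>
      (\<forall>u'. is_mmap C E u' \<and> (\<forall>a\<in>{a0, a1, a2}. eq_map (comp_chain a0 a1 A B C a)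
               (mcomp u' (comp_chain_map a0 a1 a2 F G a a2)) (chi a)) \<longrightarrow> eq_map C u u')"
  proof (intro exI[of _ "chi a2"] conjI ballI allI impI)
    show "is_mmap C E (chi a2)" using chi by force
    fix a assume a: "a \<in> {a0, a1, a2}"
    then have "(a, a2) \<in> three_order a0 a1 a2" by (auto simp: three_order_def)
    with a compatible
    show "eq_map (comp_chain a0 a1 A B C a) (mcomp (chi a2) (comp_chain_map a0 a1 a2 F G a a2)) (chi a)"
      by blast
  next
    fix u' assume "is_mmap C E u' \<and> (\<forall>a\<in>{a0, a1, a2}. eq_map (comp_chain a0 a1 A B C a)
                     (mcomp u' (comp_chain_map a0 a1 a2 F G a a2)) (chi a))"
    then have "eq_map (comp_chain a0 a1 A B C a2) (mcomp u' (comp_chain_map a0 a1 a2 F G a2 a2)) (chi a2)"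
      by blast
    then show "eq_map C (chi a2) u'" by (simp add: eq_map_def)
  qed
qed

end

text \<open>The chains in the definition of comical maps are indexed by well-orders on the type of
  cubes itself, so a composite can only be formed if that type has three distinct elements.\<close>

lemma comical_mcomp:
  fixes a0 a1 a2 :: 'a and A B C :: "'a mcset"
  assumes three: "distinct [a0, a1, a2]" and F: "comical A B F" and G: "comical B C G"
  shows "comical A C (mcomp G F)"
proof -
  have "is_mcset A" "is_mcset B" "is_mcset C" "is_mmap A B F" "is_mmap B C G"
    using comical_imp_is_mmap[OF F] comical_imp_is_mmap[OF G] by auto
  note chain = is_chain_comp_chain[OF three this] and colimit = is_colimit_comp_chain[OF three this]
  have "comical (comp_chain a0 a1 A B C a0) C (comp_chain_map a0 a1 a2 F G a0 a2)"
  proof (rule transfinite[OF chain wo_least_three_order _ _ colimit], safe)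
    fix a b assume "wo_succ (three_order a0 a1 a2) a b"
    then show "comical (comp_chain a0 a1 A B C a) (comp_chain a0 a1 A B C b) (comp_chain_map a0 a1 a2 F G a b)"
      using F G three unfolding wo_succ_three_order[OF three]
      by (auto simp: comp_chain_def comp_chain_map_def)
  qed (use not_wo_limit_three_order[OF three] in blast)
  then show ?thesis using three by (auto simp: comp_chain_def comp_chain_map_def)
qed

theorem lemma3p7:
  fixes n k :: nat and eps :: bool
  assumes "1 \<le> k" and "k \<le> n + 2"
  shows "comical (tau n (obox (n + 2) k eps)) (tau n (cube_mk (n + 2) k eps)) (\<lambda>d x. x)"
proof -
  have three: "distinct [(\<lambda>_. []) :: cmor, \<lambda>_. [True], \<lambda>_. [False]]"
    by (simp add: fun_eq_iff)
  have "comical (tau n (obox (n + 2) k eps)) (cube_mk' (n + 2) k eps) (\<lambda>d x. x)"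
    using comical_tau_obox_cube_mk'[of "n + 2" k eps] assms by simp
  moreover have "comical (cube_mk' (n + 2) k eps) (tau n (cube_mk (n + 2) k eps)) (\<lambda>d x. x)"
    using comical_cube_mk'_cube_mk''[of "n + 2" k eps] assms by (simp add: cube_mk''_def)
  ultimately show ?thesis
    using comical_mcomp[OF three] by (simp add: mcomp_def)
qed

end
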